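(* Fix $\epsilon_2>0$ and $(u_\pm,v_\pm)$ with $v_\pm>0$ and $u_-<u_+$. For small $\epsilon_1>0$ let $(u^{\epsilon_1\epsilon_2},v^{\epsilon_1\epsilon_2})$ be the two-rarefaction-wave Riemann solution of the perturbed Brio system with data $(u_\pm,v_\pm)$. Then as $\epsilon_1\to0$ the solution converges to the Riemann solution of $u_t+(\tfrac12u^2)_x=0$, $v_t+(uv-\epsilon_2v)_x=0$ consisting of a contact discontinuity $x/t=u_--\epsilon_2$ followed by a rarefaction wave, with intermediate state $(u_*^{\epsilon_2},v_*^{\epsilon_2})=\big(u_-,\,v_+\exp(\tfrac{u_--u_+}{\epsilon_2})\big)$; explicitly, with $\xi=x/t$: $(u_-,v_-)$ for $\xi<u_--\epsilon_2$; $(u_-,v_*^{\epsilon_2})$ for $u_--\epsilon_2<\xi<u_-$; $\big(\xi,\,v_*^{\epsilon_2}\exp(\tfrac{\xi-u_-}{\epsilon_2})\big)$ for $u_-\le\xi\le u_+$; $(u_+,v_+)$ for $\xi>u_+$.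
   Context: Perturbed Brio system: $u_t+(\tfrac12u^2+\tfrac12\epsilon_1v^2)_x=0$, $v_t+(uv-\epsilon_2v)_x=0$, $\epsilon_1,\epsilon_2>0$, $v>0$, with Riemann data $(u_-,v_-)$ for $x<0$, $(u_+,v_+)$ for $x>0$. With $s(v)=\sqrt{\epsilon_2^2+4\epsilon_1v^2}$ and $\lambda_{1,2}=u-\tfrac12\epsilon_2\mp\tfrac12s(v)$, the two-rarefaction-wave solution has an intermediate state $(u_*,v_* )$ lying on the backward rarefaction curve $u-\tfrac12(-s(v)+\epsilon_2\ln(s(v)+\epsilon_2))=u_--\tfrac12(-s(v_-)+\epsilon_2\ln(s(v_-)+\epsilon_2))$, $v<v_-$, with $(u_+,v_+)$ on the forward rarefaction curve $u-\tfrac12(s(v)+\epsilon_2\ln(s(v)-\epsilon_2))=u_*-\tfrac12(s(v_* )+\epsilon_2\ln(s(v_* )-\epsilon_2))$, $v>v_*$; the solution consists of $(u_-,v_-)$, a 1-fan with $x/t=\lambda_1$, the state $(u_*,v_* )$, a 2-fan with $x/t=\lambda_2$, and $(u_+,v_+)$. *)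

theory Defs
  imports "HOL-Analysis.Analysis"
begin

text \<open>Perturbed Brio system
  u_t + (u^2/2 + e1 v^2/2)_x = 0,  v_t + (u v - e2 v)_x = 0.
  Self-similar Riemann solutions are written as functions of xi = x/t.\<close>

definition sbrio :: "real \<Rightarrow> real \<Rightarrow> real \<Rightarrow> real" where
  "sbrio e1 e2 v = sqrt (e2\<^sup>2 + 4 * e1 * v\<^sup>2)"

definition lam1 :: "real \<Rightarrow> real \<Rightarrow> real \<Rightarrow> real \<Rightarrow> real" where
  "lam1 e1 e2 u v = u - e2 / 2 - sbrio e1 e2 v / 2"

definition lam2 :: "real \<Rightarrow> real \<Rightarrow> real \<Rightarrow> real \<Rightarrow> real" where
  "lam2 e1 e2 u v = u - e2 / 2 + sbrio e1 e2 v / 2"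

text \<open>Riemann invariants defining the backward (1-) and forward (2-) rarefaction curves.\<close>
definition binv :: "real \<Rightarrow> real \<Rightarrow> real \<Rightarrow> real \<Rightarrow> real" where
  "binv e1 e2 u v = u - (- sbrio e1 e2 v + e2 * ln (sbrio e1 e2 v + e2)) / 2"

definition finv :: "real \<Rightarrow> real \<Rightarrow> real \<Rightarrow> real \<Rightarrow> real" where
  "finv e1 e2 u v = u - (sbrio e1 e2 v + e2 * ln (sbrio e1 e2 v - e2)) / 2"

definition two_rarefaction_solution ::
  "real \<Rightarrow> real \<Rightarrow> real \<Rightarrow> real \<Rightarrow> real \<Rightarrow> real \<Rightarrow> (real \<Rightarrow> real) \<Rightarrow> (real \<Rightarrow> real) \<Rightarrow> bool" where
  "two_rarefaction_solution e1 e2 um vm up vp U V \<longleftrightarrow>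
     (\<exists>us vs. 0 < vs \<and> vs < vm \<and> binv e1 e2 us vs = binv e1 e2 um vm \<and>
        vs < vp \<and> finv e1 e2 up vp = finv e1 e2 us vs \<and>
        (\<forall>xi.
          (xi < lam1 e1 e2 um vm \<longrightarrow> U xi = um \<and> V xi = vm) \<and>
          (lam1 e1 e2 um vm \<le> xi \<and> xi \<le> lam1 e1 e2 us vs \<longrightarrow>
             vs \<le> V xi \<and> V xi \<le> vm \<and> binv e1 e2 (U xi) (V xi) = binv e1 e2 um vm \<and>
             lam1 e1 e2 (U xi) (V xi) = xi) \<and>
          (lam1 e1 e2 us vs < xi \<and> xi < lam2 e1 e2 us vs \<longrightarrow> U xi = us \<and> V xi = vs) \<and>
          (lam2 e1 e2 us vs \<le> xi \<and> xi \<le> lam2 e1 e2 up vp \<longrightarrow>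
             vs \<le> V xi \<and> V xi \<le> vp \<and> finv e1 e2 (U xi) (V xi) = finv e1 e2 us vs \<and>
             lam2 e1 e2 (U xi) (V xi) = xi) \<and>
          (lam2 e1 e2 up vp < xi \<longrightarrow> U xi = up \<and> V xi = vp)))"

definition vstar_lim :: "real \<Rightarrow> real \<Rightarrow> real \<Rightarrow> real \<Rightarrow> real" where
  "vstar_lim e2 um up vp = vp * exp ((um - up) / e2)"

definition U_lim :: "real \<Rightarrow> real \<Rightarrow> real \<Rightarrow> real \<Rightarrow> real" where
  "U_lim e2 um up xi =
     (if xi < um - e2 then um else if xi < um then um else if xi \<le> up then xi else up)"

definition V_lim :: "real \<Rightarrow> real \<Rightarrow> real \<Rightarrow> real \<Rightarrow> real \<Rightarrow> real \<Rightarrow> real" where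
  "V_lim e2 um vm up vp xi =
     (if xi < um - e2 then vm
      else if xi < um then vstar_lim e2 um up vp
      else if xi \<le> up then vstar_lim e2 um up vp * exp ((xi - um) / e2)
      else vp)"

end

theory Submission
  imports Defs
begin

text \<open>As \<open>e1 \<rightarrow> 0\<close> the characteristic spread \<open>sbrio e1 e2 v\<close> tends to \<open>e2\<close> uniformly for bounded
  \<open>v\<close>, so the backward invariant degenerates to \<open>u\<close> up to a constant and the intermediate
  velocity tends to \<open>um\<close>. The forward invariant contains the singular term \<open>ln (4 e1)\<close>, but
  it cancels between two states on the same forward curve, leaving the relation
  \<open>e2 ln v - u = const\<close> in the limit; this yields both the limit intermediate density and the
  exponential profile of the limit rarefaction wave. The wave speeds converge to
  \<open>um - e2\<close>, \<open>um - e2\<close>, \<open>um\<close> and \<open>up\<close>, so the 1-fan collapses to a contact discontinuity and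
  the solution converges pointwise off \<open>xi = um - e2\<close>.\<close>

lemma tendsto_cover3:
  assumes "\<forall>\<^sub>F x in F. P x \<or> Q x \<or> R x"
    and "(f \<longlongrightarrow> l) (inf F (principal {x. P x}))"
    and "(f \<longlongrightarrow> l) (inf F (principal {x. Q x}))"
    and "(f \<longlongrightarrow> l) (inf F (principal {x. R x}))"
  shows "(f \<longlongrightarrow> l) F"
  unfolding tendsto_def
proof (intro allI impI)
  fix S assume "open S" "l \<in> S"
  then have "\<forall>\<^sub>F x in F. P x \<longrightarrow> f x \<in> S" "\<forall>\<^sub>F x in F. Q x \<longrightarrow> f x \<in> S"
    "\<forall>\<^sub>F x in F. R x \<longrightarrow> f x \<in> S"
    using assms(2-4) unfolding tendsto_def eventually_inf_principal by auto
  with assms(1) show "\<forall>\<^sub>F x in F. f x \<in> S"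
    by eventually_elim blast
qed

lemma inf_principal_eq_bot:
  assumes "\<forall>\<^sub>F x in F. \<not> P x"
  shows "inf F (principal {x. P x}) = bot"
  using assms by (simp add: eventually_False[symmetric] eventually_inf_principal)

lemma sbrio_ge: "0 \<le> e1 \<Longrightarrow> e2 \<le> sbrio e1 e2 v"
  unfolding sbrio_def by (rule real_le_rsqrt) simp

lemma sbrio_mono: "0 \<le> e1 \<Longrightarrow> 0 \<le> v \<Longrightarrow> v \<le> w \<Longrightarrow> sbrio e1 e2 v \<le> sbrio e1 e2 w"
  unfolding sbrio_def by (intro real_sqrt_le_mono add_left_mono mult_left_mono power_mono) auto

lemma tendsto_sbrio:
  assumes "0 \<le> e2" and "((\<lambda>e. e) \<longlongrightarrow> 0) F"
    and "\<forall>\<^sub>F e in F. 0 \<le> e \<and> 0 \<le> v e \<and> v e \<le> c"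
  shows "((\<lambda>e. sbrio e e2 (v e)) \<longlongrightarrow> e2) F"
proof (rule tendsto_sandwich)
  show "\<forall>\<^sub>F e in F. e2 \<le> sbrio e e2 (v e)"
    using assms(3) by eventually_elim (simp add: sbrio_ge)
  show "\<forall>\<^sub>F e in F. sbrio e e2 (v e) \<le> sbrio e e2 c"
    using assms(3) by eventually_elim (simp add: sbrio_mono)
  have "((\<lambda>e. sqrt (e2\<^sup>2 + 4 * e * c\<^sup>2)) \<longlongrightarrow> sqrt (e2\<^sup>2 + 4 * 0 * c\<^sup>2)) F"
    by (intro tendsto_intros assms(2))
  then show "((\<lambda>e. sbrio e e2 c) \<longlongrightarrow> e2) F"
    using assms(1) by (simp add: sbrio_def)
qed simp


lemma tendsto_lam1:
  assumes "0 \<le> e2" and "((\<lambda>e. e) \<longlongrightarrow> 0) F" and "(u \<longlongrightarrow> a) F"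
    and "\<forall>\<^sub>F e in F. 0 \<le> e \<and> 0 \<le> v e \<and> v e \<le> c"
  shows "((\<lambda>e. lam1 e e2 (u e) (v e)) \<longlongrightarrow> a - e2) F"
proof -
  have "((\<lambda>e. u e - e2 / 2 - sbrio e e2 (v e) / 2) \<longlongrightarrow> a - e2 / 2 - e2 / 2) F"
    by (intro tendsto_intros assms(3) tendsto_sbrio[OF assms(1,2,4)]) simp
  then show ?thesis by (simp add: lam1_def)
qed

lemma tendsto_lam2:
  assumes "0 \<le> e2" and "((\<lambda>e. e) \<longlongrightarrow> 0) F" and "(u \<longlongrightarrow> a) F"
    and "\<forall>\<^sub>F e in F. 0 \<le> e \<and> 0 \<le> v e \<and> v e \<le> c"
  shows "((\<lambda>e. lam2 e e2 (u e) (v e)) \<longlongrightarrow> a) F"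
proof -
  have "((\<lambda>e. u e - e2 / 2 + sbrio e e2 (v e) / 2) \<longlongrightarrow> a - e2 / 2 + e2 / 2) F"
    by (intro tendsto_intros assms(3) tendsto_sbrio[OF assms(1,2,4)]) simp
  then show ?thesis by (simp add: lam2_def)
qed

lemma ln_sbrio_minus:
  assumes "0 < e1" and "0 < e2" and "0 < v"
  shows "ln (sbrio e1 e2 v - e2) = ln (4 * e1) + 2 * ln v - ln (sbrio e1 e2 v + e2)"
proof -
  let ?s = "sbrio e1 e2 v"
  have pos: "0 < ?s + e2"
    using sbrio_ge[of e1 e2 v] assms by linarith
  have "?s\<^sup>2 = e2\<^sup>2 + 4 * e1 * v\<^sup>2"
    unfolding sbrio_def using assms by simp
  then have "(?s - e2) * (?s + e2) = 4 * e1 * v\<^sup>2"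
    by (simp add: algebra_simps power2_eq_square)
  then have "?s - e2 = 4 * e1 * v\<^sup>2 / (?s + e2)"
    using pos by (simp add: field_simps)
  then show ?thesis
    using assms pos by (simp add: ln_divide_pos ln_mult_pos ln_realpow)
qed

text \<open>The singular term \<open>ln (4 e1)\<close> of the forward invariant cancels between the two states.\<close>

lemma finv_eq_imp_eq_exp:
  assumes "0 < e1" and "0 < e2" and "0 < v" and "0 < w"
    and "finv e1 e2 u v = finv e1 e2 u' w"
  shows "v = w * exp ((u - u' - (sbrio e1 e2 v - sbrio e1 e2 w) / 2) / e2
                     + (ln (sbrio e1 e2 v + e2) - ln (sbrio e1 e2 w + e2)) / 2)"
    (is "v = w * exp ?X")
proof -
  have "e2 * ln v = e2 * (ln w + ?X)"
    using assms(5) assms(2) ln_sbrio_minus[OF assms(1,2,3)] ln_sbrio_minus[OF assms(1,2,4)]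
    by (simp add: finv_def field_simps)
  then have "ln v = ln w + ?X"
    using assms(2) by simp
  then show ?thesis
    using assms(3,4) by (metis exp_add exp_ln)
qed

lemma tendsto_on_binv_level:
  assumes "0 < e2" and "((\<lambda>e. e) \<longlongrightarrow> 0) F" and "(u' \<longlongrightarrow> a) F"
    and "\<forall>\<^sub>F e in F. 0 \<le> e \<and> 0 \<le> v e \<and> v e \<le> c \<and> 0 \<le> v' e \<and> v' e \<le> c \<and>
                    binv e e2 (u e) (v e) = binv e e2 (u' e) (v' e)"
  shows "(u \<longlongrightarrow> a) F"
proof -
  have sv: "((\<lambda>e. sbrio e e2 (v e)) \<longlongrightarrow> e2) F" and sv': "((\<lambda>e. sbrio e e2 (v' e)) \<longlongrightarrow> e2) F"
    using assms(1,2,4) by (auto intro!: tendsto_sbrio elim: eventually_mono)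
  have "((\<lambda>e. u' e - (- sbrio e e2 (v' e) + e2 * ln (sbrio e e2 (v' e) + e2)) / 2
                  + (- sbrio e e2 (v e) + e2 * ln (sbrio e e2 (v e) + e2)) / 2)
        \<longlongrightarrow> a - (- e2 + e2 * ln (e2 + e2)) / 2 + (- e2 + e2 * ln (e2 + e2)) / 2) F"
    using assms(1) by (intro tendsto_intros assms(3) sv sv') auto
  moreover have "\<forall>\<^sub>F e in F. u' e - (- sbrio e e2 (v' e) + e2 * ln (sbrio e e2 (v' e) + e2)) / 2
                  + (- sbrio e e2 (v e) + e2 * ln (sbrio e e2 (v e) + e2)) / 2 = u e"
    using assms(4) by eventually_elim (simp add: binv_def)
  ultimately show ?thesis
    by (simp add: tendsto_cong)
qed

lemma tendsto_on_finv_level: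
  assumes "0 < e2" and "((\<lambda>e. e) \<longlongrightarrow> 0) F"
    and "(u \<longlongrightarrow> a) F" and "(u' \<longlongrightarrow> a') F" and "(v' \<longlongrightarrow> b) F"
    and "\<forall>\<^sub>F e in F. 0 < e \<and> 0 < v e \<and> v e \<le> c \<and> 0 < v' e \<and> v' e \<le> c \<and>
                    finv e e2 (u e) (v e) = finv e e2 (u' e) (v' e)"
  shows "(v \<longlongrightarrow> b * exp ((a - a') / e2)) F"
proof -
  have sv: "((\<lambda>e. sbrio e e2 (v e)) \<longlongrightarrow> e2) F" and sv': "((\<lambda>e. sbrio e e2 (v' e)) \<longlongrightarrow> e2) F"
    using assms(1,2,6) by (auto intro!: tendsto_sbrio elim: eventually_mono)
  have "((\<lambda>e. v' e * exp ((u e - u' e - (sbrio e e2 (v e) - sbrio e e2 (v' e)) / 2) / e2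
                         + (ln (sbrio e e2 (v e) + e2) - ln (sbrio e e2 (v' e) + e2)) / 2))
        \<longlongrightarrow> b * exp ((a - a' - (e2 - e2) / 2) / e2 + (ln (e2 + e2) - ln (e2 + e2)) / 2)) F"
    using assms(1) by (intro tendsto_intros assms(3-5) sv sv') auto
  moreover have "\<forall>\<^sub>F e in F. v' e * exp ((u e - u' e - (sbrio e e2 (v e) - sbrio e e2 (v' e)) / 2) / e2
                         + (ln (sbrio e e2 (v e) + e2) - ln (sbrio e e2 (v' e) + e2)) / 2) = v e"
    using assms(6) by eventually_elim (metis finv_eq_imp_eq_exp assms(1))
  ultimately show ?thesis
    by (simp add: tendsto_cong)
qed


lemma tendsto_on_lam2_level:
  assumes "0 \<le> e2" and "((\<lambda>e. e) \<longlongrightarrow> 0) F"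
    and "\<forall>\<^sub>F e in F. 0 \<le> e \<and> 0 \<le> v e \<and> v e \<le> c \<and> lam2 e e2 (u e) (v e) = xi"
  shows "(u \<longlongrightarrow> xi) F"
proof -
  have "((\<lambda>e. xi + e2 / 2 - sbrio e e2 (v e) / 2) \<longlongrightarrow> xi + e2 / 2 - e2 / 2) F"
    using assms by (intro tendsto_intros tendsto_sbrio[of _ F v c]) (auto elim: eventually_mono)
  moreover have "\<forall>\<^sub>F e in F. xi + e2 / 2 - sbrio e e2 (v e) / 2 = u e"
    using assms(3) by eventually_elim (auto simp: lam2_def)
  ultimately show ?thesis
    by (simp add: tendsto_cong)
qed

lemma vstar_lim_mult_exp: "vstar_lim e2 um up vp * exp ((up - um) / e2) = vp"
  by (simp add: vstar_lim_def mult.assoc flip: exp_add add_divide_distrib)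

definition two_rarefaction_profile ::
  "real \<Rightarrow> real \<Rightarrow> real \<Rightarrow> real \<Rightarrow> real \<Rightarrow> real \<Rightarrow> (real \<Rightarrow> real) \<Rightarrow> (real \<Rightarrow> real) \<Rightarrow>
    real \<Rightarrow> real \<Rightarrow> bool" where
  "two_rarefaction_profile e1 e2 um vm up vp U V us vs \<longleftrightarrow>
     0 < vs \<and> vs < vm \<and> binv e1 e2 us vs = binv e1 e2 um vm \<and>
     vs < vp \<and> finv e1 e2 up vp = finv e1 e2 us vs \<and>
     (\<forall>xi.
       (xi < lam1 e1 e2 um vm \<longrightarrow> U xi = um \<and> V xi = vm) \<and>
       (lam1 e1 e2 um vm \<le> xi \<and> xi \<le> lam1 e1 e2 us vs \<longrightarrow>
          vs \<le> V xi \<and> V xi \<le> vm \<and> binv e1 e2 (U xi) (V xi) = binv e1 e2 um vm \<and>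
          lam1 e1 e2 (U xi) (V xi) = xi) \<and>
       (lam1 e1 e2 us vs < xi \<and> xi < lam2 e1 e2 us vs \<longrightarrow> U xi = us \<and> V xi = vs) \<and>
       (lam2 e1 e2 us vs \<le> xi \<and> xi \<le> lam2 e1 e2 up vp \<longrightarrow>
          vs \<le> V xi \<and> V xi \<le> vp \<and> finv e1 e2 (U xi) (V xi) = finv e1 e2 us vs \<and>
          lam2 e1 e2 (U xi) (V xi) = xi) \<and>
       (lam2 e1 e2 up vp < xi \<longrightarrow> U xi = up \<and> V xi = vp))"

lemma two_rarefaction_solution_iff:
  "two_rarefaction_solution e1 e2 um vm up vp U V \<longleftrightarrow>
     (\<exists>us vs. two_rarefaction_profile e1 e2 um vm up vp U V us vs)"
  unfolding two_rarefaction_solution_def two_rarefaction_profile_def by blast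

locale two_rarefaction_family =
  fixes e2 um vm up vp :: real and U V :: "real \<Rightarrow> real \<Rightarrow> real" and us vs :: "real \<Rightarrow> real"
  assumes e2_pos: "0 < e2" and vm_pos: "0 < vm" and vp_pos: "0 < vp" and um_less_up: "um < up"
    and profile: "\<forall>\<^sub>F e in at_right 0.
                    two_rarefaction_profile e e2 um vm up vp (U e) (V e) (us e) (vs e)"
begin

abbreviation state :: "real \<Rightarrow> real \<Rightarrow> real \<times> real" where
  "state xi e \<equiv> (U e xi, V e xi)"

abbreviation limit_state :: "real \<Rightarrow> real \<times> real" where
  "limit_state xi \<equiv> (U_lim e2 um up xi, V_lim e2 um vm up vp xi)"

lemma eventually_profile:
  "\<forall>\<^sub>F e in at_right 0. 0 < e \<and> two_rarefaction_profile e e2 um vm up vp (U e) (V e) (us e) (vs e)"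
  using eventually_conj[OF eventually_at_right_less profile] .

lemma us_tendsto: "(us \<longlongrightarrow> um) (at_right 0)"
proof (rule tendsto_on_binv_level[OF e2_pos tendsto_ident_at tendsto_const])
  show "\<forall>\<^sub>F e in at_right 0. 0 \<le> e \<and> 0 \<le> vs e \<and> vs e \<le> vm \<and> 0 \<le> vm \<and> vm \<le> vm \<and>
                          binv e e2 (us e) (vs e) = binv e e2 um vm"
    by (rule eventually_mono[OF eventually_profile])
      (use vm_pos in \<open>auto simp: two_rarefaction_profile_def\<close>)
qed

lemma vs_tendsto: "(vs \<longlongrightarrow> vstar_lim e2 um up vp) (at_right 0)"
proof -
  have "(vs \<longlongrightarrow> vp * exp ((um - up) / e2)) (at_right 0)"
  proof (rule tendsto_on_finv_level[OF e2_pos tendsto_ident_at us_tendsto tendsto_const tendsto_const])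
    show "\<forall>\<^sub>F e in at_right 0. 0 < e \<and> 0 < vs e \<and> vs e \<le> max vm vp \<and> 0 < vp \<and> vp \<le> max vm vp \<and>
                            finv e e2 (us e) (vs e) = finv e e2 up vp"
      by (rule eventually_mono[OF eventually_profile])
        (use vp_pos in \<open>auto simp: two_rarefaction_profile_def\<close>)
  qed
  then show ?thesis
    by (simp add: vstar_lim_def)
qed

lemma eventually_bounded_state:
  "\<forall>\<^sub>F e in at_right 0. 0 \<le> e \<and> 0 \<le> vs e \<and> vs e \<le> vm"
  by (rule eventually_mono[OF eventually_profile]) (auto simp: two_rarefaction_profile_def)

lemma lam1_left_tendsto: "((\<lambda>e. lam1 e e2 um vm) \<longlongrightarrow> um - e2) (at_right 0)"
  using e2_pos vm_pos
  by (intro tendsto_lam1[where c = vm] tendsto_ident_at tendsto_const eventually_mono[OF eventually_bounded_state])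
    auto

lemma lam1_middle_tendsto: "((\<lambda>e. lam1 e e2 (us e) (vs e)) \<longlongrightarrow> um - e2) (at_right 0)"
  using e2_pos eventually_bounded_state
  by (intro tendsto_lam1[where c = vm] tendsto_ident_at us_tendsto) auto

lemma lam2_middle_tendsto: "((\<lambda>e. lam2 e e2 (us e) (vs e)) \<longlongrightarrow> um) (at_right 0)"
  using e2_pos eventually_bounded_state
  by (intro tendsto_lam2[where c = vm] tendsto_ident_at us_tendsto) auto

lemma lam2_right_tendsto: "((\<lambda>e. lam2 e e2 up vp) \<longlongrightarrow> up) (at_right 0)"
  using e2_pos vp_pos
  by (intro tendsto_lam2[where c = vp] tendsto_ident_at tendsto_const eventually_mono[OF eventually_bounded_state])
    auto

lemma tendsto_left_state:
  assumes "xi < um - e2"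
  shows "(state xi \<longlongrightarrow> limit_state xi) (at_right 0)"
proof (rule tendsto_eventually)
  have "\<forall>\<^sub>F e in at_right 0. xi < lam1 e e2 um vm"
    using order_tendstoD(1)[OF lam1_left_tendsto assms] .
  with eventually_profile show "\<forall>\<^sub>F e in at_right 0. state xi e = limit_state xi"
    by eventually_elim (use assms in \<open>auto simp: two_rarefaction_profile_def U_lim_def V_lim_def\<close>)
qed

lemma tendsto_middle_region:
  assumes "um - e2 < xi"
  shows "(state xi \<longlongrightarrow> limit_state xi)
           (inf (at_right 0) (principal {e. xi < lam2 e e2 (us e) (vs e)}))"
    (is "(_ \<longlongrightarrow> _) ?G")
proof (cases "xi \<le> um")
  case True
  have "\<forall>\<^sub>F e in at_right 0. lam1 e e2 (us e) (vs e) < xi"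
    using order_tendstoD(2)[OF lam1_middle_tendsto assms] .
  with eventually_profile have "\<forall>\<^sub>F e in ?G. (us e, vs e) = state xi e"
    unfolding eventually_inf_principal
    by eventually_elim (auto simp: two_rarefaction_profile_def)
  moreover have "((\<lambda>e. (us e, vs e)) \<longlongrightarrow> limit_state xi) ?G"
    using True assms um_less_up tendsto_mono[OF _ tendsto_Pair[OF us_tendsto vs_tendsto], of ?G]
    by (auto simp: U_lim_def V_lim_def)
  ultimately show ?thesis
    by (rule Lim_transform_eventually[rotated])
next
  case False
  then have "\<forall>\<^sub>F e in at_right 0. \<not> xi < lam2 e e2 (us e) (vs e)"
    using order_tendstoD(2)[OF lam2_middle_tendsto, of xi] by (auto elim: eventually_mono)
  then show ?thesis
    by (simp add: inf_principal_eq_bot)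
qed

lemma tendsto_right_region:
  "(state xi \<longlongrightarrow> limit_state xi) (inf (at_right 0) (principal {e. lam2 e e2 up vp < xi}))"
proof (cases "up \<le> xi")
  case True
  have "limit_state xi = (up, vp)"
    using True um_less_up e2_pos vstar_lim_mult_exp[of e2 um up vp] by (auto simp: U_lim_def V_lim_def)
  moreover have "\<forall>\<^sub>F e in inf (at_right 0) (principal {e. lam2 e e2 up vp < xi}). state xi e = (up, vp)"
    using eventually_profile unfolding eventually_inf_principal
    by eventually_elim (auto simp: two_rarefaction_profile_def)
  ultimately show ?thesis
    by (simp add: tendsto_eventually)
next
  case False
  then have "\<forall>\<^sub>F e in at_right 0. \<not> lam2 e e2 up vp < xi"
    using order_tendstoD(1)[OF lam2_right_tendsto, of xi] by (auto elim: eventually_mono)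
  then show ?thesis
    by (simp add: inf_principal_eq_bot)
qed

lemma tendsto_fan_region:
  "(state xi \<longlongrightarrow> limit_state xi)
     (inf (at_right 0) (principal {e. lam2 e e2 (us e) (vs e) \<le> xi \<and> xi \<le> lam2 e e2 up vp}))"
    (is "(_ \<longlongrightarrow> _) ?G")
proof (cases "um \<le> xi \<and> xi \<le> up")
  case True
  have G: "?G \<le> at_right 0"
    by simp
  have fan: "\<forall>\<^sub>F e in ?G. 0 < e \<and> 0 < V e xi \<and> V e xi \<le> vp \<and> 0 < vs e \<and> vs e \<le> vp \<and>
      finv e e2 (U e xi) (V e xi) = finv e e2 (us e) (vs e)"
    and speed: "\<forall>\<^sub>F e in ?G. lam2 e e2 (U e xi) (V e xi) = xi"
    using eventually_profile unfolding eventually_inf_principal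
    by (eventually_elim, force simp: two_rarefaction_profile_def)+
  have U: "((\<lambda>e. U e xi) \<longlongrightarrow> xi) ?G"
  proof (rule tendsto_on_lam2_level[OF _ tendsto_mono[OF G tendsto_ident_at]])
    show "\<forall>\<^sub>F e in ?G. 0 \<le> e \<and> 0 \<le> V e xi \<and> V e xi \<le> vp \<and> lam2 e e2 (U e xi) (V e xi) = xi"
      using fan speed by eventually_elim simp
  qed (use e2_pos in simp)
  have V: "((\<lambda>e. V e xi) \<longlongrightarrow> vstar_lim e2 um up vp * exp ((xi - um) / e2)) ?G"
    by (rule tendsto_on_finv_level[OF e2_pos tendsto_mono[OF G tendsto_ident_at] U
          tendsto_mono[OF G us_tendsto] tendsto_mono[OF G vs_tendsto] fan])
  have "limit_state xi = (xi, vstar_lim e2 um up vp * exp ((xi - um) / e2))"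
    using True e2_pos by (auto simp: U_lim_def V_lim_def)
  then show ?thesis
    using tendsto_Pair[OF U V] by simp
next
  case False
  then consider "xi < um" | "up < xi"
    by linarith
  then have "\<forall>\<^sub>F e in at_right 0. \<not> (lam2 e e2 (us e) (vs e) \<le> xi \<and> xi \<le> lam2 e e2 up vp)"
  proof cases
    case 1
    then show ?thesis
      using order_tendstoD(1)[OF lam2_middle_tendsto 1] by (auto elim: eventually_mono)
  next
    case 2
    then show ?thesis
      using order_tendstoD(2)[OF lam2_right_tendsto 2] by (auto elim: eventually_mono)
  qed
  then show ?thesis
    by (simp add: inf_principal_eq_bot)
qed

text \<open>Right of the collapsing 1-fan, \<open>xi\<close> lies in the middle state, the 2-fan or the right
  state. Which one may alternate as \<open>e1 \<rightarrow> 0\<close> when \<open>xi = um\<close> or \<open>xi = up\<close>, so the limit is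
  taken separately along each of the three sets of \<open>e1\<close>.\<close>

lemma tendsto_limit_state:
  assumes "xi \<noteq> um - e2"
  shows "(state xi \<longlongrightarrow> limit_state xi) (at_right 0)"
proof (cases "xi < um - e2")
  case True
  then show ?thesis
    by (rule tendsto_left_state)
next
  case False
  with assms have "um - e2 < xi"
    by simp
  then show ?thesis
    by (intro tendsto_cover3[OF _ tendsto_middle_region tendsto_fan_region tendsto_right_region]
        always_eventually) auto
qed

end

theorem theorem6p2:
  fixes e2 um vm up vp :: real
    and U V :: "real \<Rightarrow> real \<Rightarrow> real"
  assumes "0 < e2" and "0 < vm" and "0 < vp" and "um < up"
    and "\<forall>\<^sub>F e1 in at_right 0. two_rarefaction_solution e1 e2 um vm up vp (U e1) (V e1)"
  shows "\<forall>xi. xi \<noteq> um - e2 \<longrightarrow>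
           ((\<lambda>e1. U e1 xi) \<longlongrightarrow> U_lim e2 um up xi) (at_right 0) \<and>
           ((\<lambda>e1. V e1 xi) \<longlongrightarrow> V_lim e2 um vm up vp xi) (at_right 0)"
proof -
  have "\<forall>\<^sub>F e in at_right 0. \<exists>w. two_rarefaction_profile e e2 um vm up vp (U e) (V e) (fst w) (snd w)"
    using assms(5) by (simp add: two_rarefaction_solution_iff)
  then obtain w where "\<forall>\<^sub>F e in at_right 0.
      two_rarefaction_profile e e2 um vm up vp (U e) (V e) (fst (w e)) (snd (w e))"
    unfolding eventually_ex by blast
  with assms(1-4) interpret two_rarefaction_family e2 um vm up vp U V "\<lambda>e. fst (w e)" "\<lambda>e. snd (w e)"
    by unfold_locales
  show ?thesis
    using tendsto_fst[OF tendsto_limit_state] tendsto_snd[OF tendsto_limit_state] by simp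
qed

end
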